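(* In the setting described in the context, a bounded set $\mathcal{K}\subseteq\mathcal{H}$ is precompact if and only if $\{\mathcal{W}f(z): f\in\mathcal{K}\}$ is precompact in $H_1$ for each $z\in G$ and $$\lim_{N\to\infty}\sup_{f\in\mathcal{K}}\int_{G\setminus E_N}\|\mathcal{W}f(z)\|_{H_1}^2\,dz=0.$$
   Context: Setting: $H_1,H_2$ are separable Hilbert spaces, $G$ is a separable locally compact group with left Haar measure $dz$. $\{E_N\}_{N\in\mathbb{N}}$ is a sequence of open precompact subsets of $G$ with $E_N\subseteq E_{N+1}$, $E_N^{-1}=E_N$, $E_NE_N\subseteq E_{2N}$, $\bigcup_NE_N=G$. $\{\psi_z\}_{z\in G}\subseteq H_2$ is a bounded family, $z\mapsto\psi_z$ norm-continuous, forming a continuous Parseval frame: $\langle f,g\rangle_{H_2}=\int_G\langle f,\psi_z\rangle\langle\psi_z,g\rangle\,dz$ for all $f,g\in H_2$. $\mathcal{H}=H_1\widehat\otimes H_2$ is the Hilbert space tensor product (completion of the algebraic tensor product with $\langle a_1\otimes b_1,a_2\otimes b_2\rangle=\langle a_1,a_2\rangle\langle b_1,b_2\rangle$). For $f\in\mathcal{H}$, $g\in H_2$, $\langle f,g\rangle_{H_2}\in H_1$ is the continuous extension of $\sum c_na_n\otimes b_n\mapsto\sum c_na_n\langle b_n,g\rangle_{H_2}$. The wavelet transform $\mathcal{W}:\mathcal{H}\to L^2(G;H_1)$ is $\mathcal{W}f(z)=\langle f,\psi_z\rangle_{H_2}$. *)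

theory Defs
  imports "HOL-Analysis.Analysis"
begin

definition complex_hilbert_ip :: "(complex \<Rightarrow> 'a \<Rightarrow> 'a) \<Rightarrow> ('a::{real_normed_vector,complete_space} \<Rightarrow> 'a \<Rightarrow> complex) \<Rightarrow> bool" where
  "complex_hilbert_ip sc ip \<longleftrightarrow>
     (\<forall>r x. sc (complex_of_real r) x = r *\<^sub>R x) \<and>
     (\<forall>a b x. sc (a * b) x = sc a (sc b x)) \<and>
     (\<forall>a b x. sc (a + b) x = sc a x + sc b x) \<and>
     (\<forall>a x y. sc a (x + y) = sc a x + sc a y) \<and>
     (\<forall>x y z. ip (x + y) z = ip x z + ip y z) \<and>
     (\<forall>c x y. ip (sc c x) y = c * ip x y) \<and>
     (\<forall>x y. ip x y = cnj (ip y x)) \<and>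
     (\<forall>x. ip x x = complex_of_real ((norm x)\<^sup>2))"

definition separable_hilbert :: "(complex \<Rightarrow> 'a \<Rightarrow> 'a) \<Rightarrow> ('a::{real_normed_vector,complete_space} \<Rightarrow> 'a \<Rightarrow> complex) \<Rightarrow> bool" where
  "separable_hilbert sc ip \<longleftrightarrow> complex_hilbert_ip sc ip \<and> separable_space (euclidean :: 'a topology)"

text \<open>This is the
  completion of the algebraic tensor product, up to unitary isomorphism.\<close>
definition hilbert_tensor_product ::
  "(complex \<Rightarrow> 'a \<Rightarrow> 'a) \<Rightarrow> (complex \<Rightarrow> 'b \<Rightarrow> 'b) \<Rightarrow> (complex \<Rightarrow> 'h \<Rightarrow> 'h) \<Rightarrow> ('a \<Rightarrow> 'a \<Rightarrow> complex) \<Rightarrow> ('b \<Rightarrow> 'b \<Rightarrow> complex) \<Rightarrow> ('h::{real_normed_vector,complete_space} \<Rightarrow> 'h \<Rightarrow> complex)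
    \<Rightarrow> ('a::{real_normed_vector,complete_space} \<Rightarrow> 'b::{real_normed_vector,complete_space} \<Rightarrow> 'h) \<Rightarrow> bool" where
  "hilbert_tensor_product sc1 sc2 scH ip1 ip2 ipH tp \<longleftrightarrow>
     complex_hilbert_ip scH ipH \<and>
     (\<forall>a a' b. tp (a + a') b = tp a b + tp a' b) \<and>
     (\<forall>a b b'. tp a (b + b') = tp a b + tp a b') \<and>
     (\<forall>c a b. tp (sc1 c a) b = scH c (tp a b)) \<and>
     (\<forall>c a b. tp a (sc2 c b) = scH c (tp a b)) \<and>
     (\<forall>a1 a2 b1 b2. ipH (tp a1 b1) (tp a2 b2) = ip1 a1 a2 * ip2 b1 b2) \<and>
     closure (span (range (\<lambda>(a, b). tp a b))) = UNIV"

definition partial_ip ::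
  "(complex \<Rightarrow> 'a::real_normed_vector \<Rightarrow> 'a) \<Rightarrow> ('b \<Rightarrow> 'b \<Rightarrow> complex) \<Rightarrow> ('a \<Rightarrow> 'b \<Rightarrow> 'h::real_normed_vector) \<Rightarrow> 'h \<Rightarrow> 'b \<Rightarrow> 'a" where
  "partial_ip sc1 ip2 tp f g =
     (THE L :: 'h \<Rightarrow> 'a. bounded_linear L \<and> (\<forall>a b. L (tp a b) = sc1 (ip2 b g) a)) f"

definition wavelet_transform ::
  "(complex \<Rightarrow> 'a::real_normed_vector \<Rightarrow> 'a) \<Rightarrow> ('b \<Rightarrow> 'b \<Rightarrow> complex) \<Rightarrow> ('a \<Rightarrow> 'b \<Rightarrow> 'h::real_normed_vector) \<Rightarrow> ('g \<Rightarrow> 'b) \<Rightarrow> 'h \<Rightarrow> 'g \<Rightarrow> 'a" where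
  "wavelet_transform sc1 ip2 tp \<psi> f z = partial_ip sc1 ip2 tp f (\<psi> z)"

text \<open>Left Haar measure on a locally compact group (written additively, not
  necessarily commutative): a nonzero left-invariant Radon measure on the Borel sets.\<close>
definition left_haar_measure :: "'g::topological_group_add measure \<Rightarrow> bool" where
  "left_haar_measure \<mu> \<longleftrightarrow>
     sets \<mu> = sets borel \<and>
     (\<forall>g A. A \<in> sets borel \<longrightarrow> emeasure \<mu> ((\<lambda>x. g + x) ` A) = emeasure \<mu> A) \<and>
     (\<forall>K. compact K \<longrightarrow> emeasure \<mu> K < \<infinity>) \<and>
     (\<forall>A \<in> sets borel. emeasure \<mu> A = (INF U \<in> {U. open U \<and> A \<subseteq> U}. emeasure \<mu> U)) \<and>
     (\<forall>U. open U \<longrightarrow> emeasure \<mu> U = (SUP K \<in> {K. compact K \<and> K \<subseteq> U}. emeasure \<mu> K)) \<and>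
     emeasure \<mu> UNIV \<noteq> 0"

definition continuous_parseval_frame ::
  "('b \<Rightarrow> 'b \<Rightarrow> complex) \<Rightarrow> 'g measure \<Rightarrow> ('g \<Rightarrow> 'b) \<Rightarrow> bool" where
  "continuous_parseval_frame ip \<mu> \<psi> \<longleftrightarrow>
     (\<forall>f g. integrable \<mu> (\<lambda>z. ip f (\<psi> z) * ip (\<psi> z) g) \<and>
            ip f g = (\<integral>z. ip f (\<psi> z) * ip (\<psi> z) g \<partial>\<mu>))"

end

theory Submission
  imports Defs
begin

text \<open>
  The wavelet transform is contractive, \<open>\<integral>\<parallel>W f\<parallel>\<^sup>2 \<le> \<parallel>f\<parallel>\<^sup>2\<close>: it is isometric on the span of
  elementary tensors (this is the Parseval frame identity), and Fatou's lemma passes to limits.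
  The same density argument gives \<open>\<parallel>f\<parallel>\<^sup>2 \<le> 2 \<integral>\<parallel>W f\<parallel>\<^sup>2\<close>. Moreover
  \<open>\<parallel>W f z - W f z'\<parallel> \<le> \<parallel>f\<parallel> \<parallel>\<psi> z - \<psi> z'\<parallel>\<close>, so the transforms of a bounded set are equicontinuous.

  If \<open>K\<close> is precompact, the continuous maps \<open>f \<mapsto> W f z\<close> have precompact images, and the tails
  of the finitely many centres of an \<open>\<epsilon>\<close>-net of \<open>K\<close> vanish, which by contractivity makes all tails
  uniformly small. Conversely, choose \<open>N\<close> such that all tails outside \<open>E\<^sub>N\<close> are small. By
  equicontinuity on the compact closure of \<open>E\<^sub>N\<close>, precompactness at finitely many points yields a
  finite subset of \<open>K\<close> approximating every transform uniformly on \<open>E\<^sub>N\<close>. As \<open>E\<^sub>N\<close> has finite Haar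
  measure, \<open>\<parallel>f\<parallel>\<^sup>2 \<le> 2 \<integral>\<parallel>W f\<parallel>\<^sup>2\<close> turns this into a finite \<open>\<epsilon>\<close>-net of \<open>K\<close>.
\<close>

section \<open>Finite nets and tail integrals\<close>

lemma norm_add_power2_le:
  fixes a b :: "'a::real_normed_vector"
  shows "(norm (a + b))\<^sup>2 \<le> 2 * (norm a)\<^sup>2 + 2 * (norm b)\<^sup>2"
proof -
  have "(norm (a + b))\<^sup>2 \<le> (norm a + norm b)\<^sup>2"
    by (simp add: norm_triangle_ineq power_mono)
  also have "\<dots> \<le> 2 * (norm a)\<^sup>2 + 2 * (norm b)\<^sup>2"
    using sum_squares_bound[of "norm a" "norm b"] by (simp add: power2_eq_square algebra_simps)
  finally show ?thesis .
qed

lemma nn_set_integral_norm_add_power2_le: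
  fixes u v :: "'a \<Rightarrow> 'b::real_normed_vector"
  assumes [measurable]: "u \<in> borel_measurable M" "v \<in> borel_measurable M" "A \<in> sets M"
  shows "(\<integral>\<^sup>+x\<in>A. ennreal ((norm (u x + v x))\<^sup>2) \<partial>M)
    \<le> 2 * (\<integral>\<^sup>+x\<in>A. ennreal ((norm (u x))\<^sup>2) \<partial>M) + 2 * (\<integral>\<^sup>+x\<in>A. ennreal ((norm (v x))\<^sup>2) \<partial>M)"
proof -
  have "(\<integral>\<^sup>+x\<in>A. ennreal ((norm (u x + v x))\<^sup>2) \<partial>M)
      \<le> (\<integral>\<^sup>+x\<in>A. 2 * ennreal ((norm (u x))\<^sup>2) + 2 * ennreal ((norm (v x))\<^sup>2) \<partial>M)"
  proof (rule nn_integral_mono)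
    fix x
    have "ennreal ((norm (u x + v x))\<^sup>2) \<le> ennreal (2 * (norm (u x))\<^sup>2 + 2 * (norm (v x))\<^sup>2)"
      by (rule ennreal_leI) (rule norm_add_power2_le)
    then show "ennreal ((norm (u x + v x))\<^sup>2) * indicator A x
        \<le> (2 * ennreal ((norm (u x))\<^sup>2) + 2 * ennreal ((norm (v x))\<^sup>2)) * indicator A x"
      by (simp add: ennreal_mult split: split_indicator)
  qed
  also have "\<dots> = 2 * (\<integral>\<^sup>+x\<in>A. ennreal ((norm (u x))\<^sup>2) \<partial>M) + 2 * (\<integral>\<^sup>+x\<in>A. ennreal ((norm (v x))\<^sup>2) \<partial>M)"
    by (simp add: nn_set_integral_add nn_integral_cmult mult.assoc)
  finally show ?thesis .
qed

lemma tendsto_nn_set_integral_Diff_incseq: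
  fixes f :: "'a \<Rightarrow> ennreal"
  assumes [measurable]: "f \<in> borel_measurable M" "\<And>n. A n \<in> sets M"
    and fin: "(\<integral>\<^sup>+x. f x \<partial>M) \<noteq> \<infinity>" and "incseq A" and cover: "(\<Union>n. A n) = space M"
  shows "(\<lambda>n. \<integral>\<^sup>+x\<in>space M - A n. f x \<partial>M) \<longlonglongrightarrow> 0"
proof -
  have density: "(\<integral>\<^sup>+x\<in>space M - A n. f x \<partial>M) = emeasure (density M f) (space M - A n)" for n
    by (simp add: emeasure_density)
  have "(\<lambda>n. emeasure (density M f) (space M - A n)) \<longlonglongrightarrow> emeasure (density M f) (\<Inter>n. space M - A n)"
  proof (rule Lim_emeasure_decseq)
    show "decseq (\<lambda>n. space M - A n)"
      using \<open>incseq A\<close> by (auto simp: incseq_def decseq_def)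
    have "emeasure (density M f) (space M) \<noteq> \<infinity>"
      using fin by (simp add: emeasure_density)
    then show "emeasure (density M f) (space M - A n) \<noteq> \<infinity>" for n
      unfolding infinity_ennreal_def by (rule neq_top_trans) (rule emeasure_mono; simp)
  qed auto
  also have "(\<Inter>n. space M - A n) = {}"
    using cover by blast
  finally show ?thesis
    by (simp add: density)
qed

lemma ennreal_tendsto_zeroI:
  fixes X :: "nat \<Rightarrow> ennreal"
  assumes "\<And>e. 0 < e \<Longrightarrow> eventually (\<lambda>n. X n \<le> ennreal e) sequentially"
  shows "X \<longlonglongrightarrow> 0"
proof (rule order_tendstoI)
  fix u :: ennreal assume "0 < u"
  then obtain e' where e': "0 < e'" "e' < u"
    using dense by blast
  then have "e' < \<infinity>"
    using less_le_trans top_greatest by (metis infinity_ennreal_def)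
  then obtain e where e: "e' = ennreal e" "0 \<le> e"
    by (metis infinity_ennreal_def less_top_ennreal)
  then have "0 < e" "ennreal e < u"
    using e' by simp_all
  from assms[OF this(1)] show "eventually (\<lambda>n. X n < u) sequentially"
    by (rule eventually_mono) (rule le_less_trans[OF _ \<open>ennreal e < u\<close>])
qed simp

lemma compact_closure_imp_finite_net:
  fixes S :: "'a::metric_space set"
  assumes "compact (closure S)" "0 < e"
  obtains k where "finite k" "k \<subseteq> S" "S \<subseteq> (\<Union>x\<in>k. ball x e)"
  using Met_TC.compact_closure_of_imp_mtotally_bounded[of S] assms
  unfolding Met_TC.mtotally_bounded_def by auto

lemma finite_nets_imp_compact_closure:
  fixes S :: "'a::{metric_space,complete_space} set"
  assumes "\<And>e. 0 < e \<Longrightarrow> \<exists>k. finite k \<and> k \<subseteq> S \<and> S \<subseteq> (\<Union>x\<in>k. ball x e)"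
  shows "compact (closure S)"
  using Met_TC.mtotally_bounded_eq_compact_closure_of[of S] assms complete_UNIV
  unfolding Met_TC.mtotally_bounded_def by auto

lemma compact_closure_continuous_image:
  fixes f :: "'a::topological_space \<Rightarrow> 'b::t2_space"
  assumes "compact (closure S)" "continuous_on (closure S) f"
  shows "compact (closure (f ` S))"
proof -
  have "compact (f ` closure S)"
    using assms by (rule compact_continuous_image[rotated])
  moreover have "closure (f ` S) \<subseteq> f ` closure S"
    using compact_imp_closed[OF \<open>compact (f ` closure S)\<close>]
    by (rule closure_minimal[rotated]) (intro image_mono closure_subset)
  ultimately show ?thesis
    using compact_Int_closed[of "f ` closure S" "closure (f ` S)"] by (simp add: Int_absorb1)
qed

lemma finite_net_at_finitely_many_points:
  fixes \<Phi> :: "'z \<Rightarrow> 'x \<Rightarrow> 'y::metric_space"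
  assumes "finite Z" and pointwise: "\<And>z. z \<in> Z \<Longrightarrow> compact (closure (\<Phi> z ` K))" and "0 < \<delta>"
  obtains k where "finite k" "k \<subseteq> K" "\<And>f. f \<in> K \<Longrightarrow> \<exists>g\<in>k. \<forall>z\<in>Z. dist (\<Phi> z f) (\<Phi> z g) < \<delta>"
proof -
  have "\<forall>z\<in>Z. \<exists>Y. finite Y \<and> \<Phi> z ` K \<subseteq> (\<Union>y\<in>Y. ball y (\<delta>/2))"
    using compact_closure_imp_finite_net[OF pointwise] \<open>0 < \<delta>\<close> by (metis half_gt_zero)
  then obtain Y where Y: "\<And>z. z \<in> Z \<Longrightarrow> finite (Y z)"
    "\<And>z. z \<in> Z \<Longrightarrow> \<Phi> z ` K \<subseteq> (\<Union>y\<in>Y z. ball y (\<delta>/2))"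
    by metis
  define label where "label f = (\<lambda>z\<in>Z. SOME y. y \<in> Y z \<and> dist y (\<Phi> z f) < \<delta>/2)" for f
  have label: "label f z \<in> Y z \<and> dist (label f z) (\<Phi> z f) < \<delta>/2" if "f \<in> K" "z \<in> Z" for f z
  proof -
    have "\<Phi> z f \<in> (\<Union>y\<in>Y z. ball y (\<delta>/2))"
      using Y(2)[OF that(2)] that(1) by blast
    then have "\<exists>y. y \<in> Y z \<and> dist y (\<Phi> z f) < \<delta>/2"
      by auto
    then show ?thesis
      unfolding label_def restrict_apply'[OF that(2)] by (rule someI_ex)
  qed
  \<comment> \<open>Elements with the same label are \<open>\<delta>\<close>-close at every point of \<open>Z\<close>; there are finitely many labels.\<close>
  define k where "k = inv_into K label ` label ` K"
  have "label ` K \<subseteq> Pi\<^sub>E Z Y"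
    using label by (auto simp: label_def)
  moreover have "finite (Pi\<^sub>E Z Y)"
    using \<open>finite Z\<close> Y(1) by (rule finite_PiE)
  ultimately have "finite k"
    unfolding k_def by (blast intro: finite_subset)
  moreover have "k \<subseteq> K"
    by (auto simp: k_def inv_into_into)
  moreover have "\<exists>g\<in>k. \<forall>z\<in>Z. dist (\<Phi> z f) (\<Phi> z g) < \<delta>" if "f \<in> K" for f
  proof (intro bexI ballI)
    let ?g = "inv_into K label (label f)"
    show "?g \<in> k" using that by (simp add: k_def)
    have "?g \<in> K" "label ?g = label f"
      using that by (auto intro: inv_into_into f_inv_into_f)
    then show "dist (\<Phi> z f) (\<Phi> z ?g) < \<delta>" if "z \<in> Z" for z
      using label[OF \<open>f \<in> K\<close> \<open>z \<in> Z\<close>] label[OF \<open>?g \<in> K\<close> \<open>z \<in> Z\<close>]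
        dist_triangle_half_r[of "label f z" "\<Phi> z f" \<delta> "\<Phi> z ?g"] by (auto simp: dist_commute)
  qed
  ultimately show ?thesis using that by blast
qed

lemma exhaustion_Suc:
  assumes "\<And>N. N \<ge> 1 \<Longrightarrow> E N \<subseteq> E (Suc N)" and "(\<Union>N\<in>{1..}. E N) = UNIV"
  shows "incseq (\<lambda>n. E (Suc n))" "(\<Union>n. E (Suc n)) = UNIV"
proof -
  show "incseq (\<lambda>n. E (Suc n))"
    using assms(1) by (intro incseq_SucI) simp
  have "x \<in> (\<Union>n. E (Suc n))" for x
  proof -
    obtain N where "N \<ge> 1" "x \<in> E N"
      using assms(2) by blast
    then show ?thesis
      by (intro UN_I[of "N - 1"]) auto
  qed
  then show "(\<Union>n. E (Suc n)) = UNIV"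
    by blast
qed

section \<open>Complex inner products\<close>

locale complex_inner_structure =
  fixes sc :: "complex \<Rightarrow> 'a::{real_normed_vector,complete_space} \<Rightarrow> 'a"
    and ip :: "'a \<Rightarrow> 'a \<Rightarrow> complex"
  assumes complex_hilbert_ip: "complex_hilbert_ip sc ip"
begin

lemma sc_of_real: "sc (complex_of_real r) x = r *\<^sub>R x"
  and ip_add_left: "ip (x + y) z = ip x z + ip y z"
  and ip_sc_left: "ip (sc c x) y = c * ip x y"
  and ip_cnj: "ip x y = cnj (ip y x)"
  and ip_self: "ip x x = complex_of_real ((norm x)\<^sup>2)"
  using complex_hilbert_ip unfolding complex_hilbert_ip_def by blast+

lemma ip_add_right: "ip x (y + z) = ip x y + ip x z"
  by (metis complex_cnj_add ip_add_left ip_cnj)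

lemma ip_sc_right: "ip x (sc c y) = cnj c * ip x y"
  by (metis complex_cnj_mult ip_cnj ip_sc_left)

lemma ip_scaleR_left: "ip (r *\<^sub>R x) y = r *\<^sub>R ip x y"
  by (metis ip_sc_left sc_of_real scaleR_conv_of_real)

lemma ip_scaleR_right: "ip x (r *\<^sub>R y) = r *\<^sub>R ip x y"
  by (metis complex_cnj_complex_of_real ip_sc_right sc_of_real scaleR_conv_of_real)

lemma ip_zero_left [simp]: "ip 0 y = 0"
  using ip_add_left[of 0 0 y] by simp

lemma ip_zero_right [simp]: "ip y 0 = 0"
  using ip_cnj[of y 0] by simp

lemma ip_sum_left: "ip (\<Sum>i\<in>I. x i) y = (\<Sum>i\<in>I. ip (x i) y)"
  by (induction I rule: infinite_finite_induct) (auto simp: ip_add_left)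

lemma ip_sum_right: "ip y (\<Sum>i\<in>I. x i) = (\<Sum>i\<in>I. ip y (x i))"
  by (induction I rule: infinite_finite_induct) (auto simp: ip_add_right)

lemma Re_ip_self: "Re (ip x x) = (norm x)\<^sup>2"
  by (simp add: ip_self)

lemma Re_ip_le: "Re (ip x y) \<le> norm x * norm y"
proof -
  have "(norm (x + y))\<^sup>2 = (norm x)\<^sup>2 + (norm y)\<^sup>2 + 2 * Re (ip x y)"
    using ip_cnj[of y x] by (simp flip: Re_ip_self add: ip_add_left ip_add_right)
  moreover have "(norm (x + y))\<^sup>2 \<le> (norm x + norm y)\<^sup>2"
    by (simp add: norm_triangle_ineq power_mono)
  ultimately show ?thesis
    by (simp add: power2_eq_square algebra_simps)
qed

lemma norm_sc: "norm (sc c x) = cmod c * norm x"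
proof -
  have "ip (sc c x) (sc c x) = (c * cnj c) * ip x x"
    by (simp add: ip_sc_left ip_sc_right)
  then have "complex_of_real ((norm (sc c x))\<^sup>2) = complex_of_real ((cmod c * norm x)\<^sup>2)"
    by (simp only: ip_self complex_norm_square power_mult_distrib of_real_mult)
  then have "(norm (sc c x))\<^sup>2 = (cmod c * norm x)\<^sup>2"
    by (simp only: of_real_eq_iff)
  then show ?thesis
    by (rule power2_eq_imp_eq) auto
qed

text \<open>Rotate \<open>x\<close> by a unimodular scalar so that \<open>ip x y\<close> becomes real, then use \<open>Re_ip_le\<close>.\<close>
lemma norm_ip_le: "cmod (ip x y) \<le> norm x * norm y"
proof (cases "ip x y = 0")
  case False
  define c where "c = cnj (ip x y) / cmod (ip x y)"
  have "c * ip x y = (ip x y * cnj (ip x y)) / complex_of_real (cmod (ip x y))"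
    by (simp add: c_def mult.commute)
  also have "\<dots> = complex_of_real ((cmod (ip x y))\<^sup>2) / complex_of_real (cmod (ip x y))"
    by (simp only: complex_norm_square)
  also have "\<dots> = complex_of_real (cmod (ip x y))"
    using False by (simp add: power2_eq_square)
  finally have "c * ip x y = complex_of_real (cmod (ip x y))" .
  then have "cmod (ip x y) = Re (ip (sc c x) y)"
    by (simp add: ip_sc_left)
  also have "\<dots> \<le> norm (sc c x) * norm y"
    by (rule Re_ip_le)
  also have "\<dots> = norm x * norm y"
    using False by (simp add: norm_sc c_def norm_divide)
  finally show ?thesis .
qed simp

lemma bounded_linear_ip_left: "bounded_linear (\<lambda>x. ip x y)"
  by (rule bounded_linear_intro[where K="norm y"]) (simp_all add: ip_add_left ip_scaleR_left norm_ip_le)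

lemma ip_left_eq_zeroD: "(\<And>y. ip x y = 0) \<Longrightarrow> x = 0"
  using ip_self[of x] by simp

end

section \<open>The partial inner product on a tensor product\<close>

locale hilbert_tensor =
  fixes sc1 :: "complex \<Rightarrow> 'a::{real_normed_vector,complete_space} \<Rightarrow> 'a"
    and sc2 :: "complex \<Rightarrow> 'b::{real_normed_vector,complete_space} \<Rightarrow> 'b"
    and scH :: "complex \<Rightarrow> 'h::{real_normed_vector,complete_space} \<Rightarrow> 'h"
    and ip1 :: "'a \<Rightarrow> 'a \<Rightarrow> complex"
    and ip2 :: "'b \<Rightarrow> 'b \<Rightarrow> complex"
    and ipH :: "'h \<Rightarrow> 'h \<Rightarrow> complex"
    and tp :: "'a \<Rightarrow> 'b \<Rightarrow> 'h"
  assumes H1: "complex_hilbert_ip sc1 ip1"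
    and H2: "complex_hilbert_ip sc2 ip2"
    and tensor: "hilbert_tensor_product sc1 sc2 scH ip1 ip2 ipH tp"
begin

sublocale H1: complex_inner_structure sc1 ip1
  by (rule complex_inner_structure.intro, rule H1)

sublocale H2: complex_inner_structure sc2 ip2
  by (rule complex_inner_structure.intro, rule H2)

sublocale H: complex_inner_structure scH ipH
  using tensor by (auto intro!: complex_inner_structure.intro simp: hilbert_tensor_product_def)

lemma tp_add_right: "tp a (b + b') = tp a b + tp a b'"
  and tp_sc_left: "tp (sc1 c a) b = scH c (tp a b)"
  and tp_sc_right: "tp a (sc2 c b) = scH c (tp a b)"
  and ip_tp: "ipH (tp a b) (tp a' b') = ip1 a a' * ip2 b b'"
  and closure_span_tp: "closure (span (range (\<lambda>(a, b). tp a b))) = UNIV"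
  using tensor unfolding hilbert_tensor_product_def by blast+

lemma tp_scaleR_left: "tp (r *\<^sub>R a) b = r *\<^sub>R tp a b"
  using tp_sc_left[of "complex_of_real r" a b] by (simp add: H1.sc_of_real H.sc_of_real)

lemma tp_scaleR_right: "tp a (r *\<^sub>R b) = r *\<^sub>R tp a b"
  using tp_sc_right[of a "complex_of_real r" b] by (simp add: H2.sc_of_real H.sc_of_real)

lemma norm_tp: "norm (tp a b) = norm a * norm b"
proof -
  have "(norm (tp a b))\<^sup>2 = (norm a * norm b)\<^sup>2"
    using H.Re_ip_self[of "tp a b"] H1.Re_ip_self[of a] H2.Re_ip_self[of b]
    by (simp add: ip_tp power_mult_distrib H1.ip_self H2.ip_self)
  then show ?thesis
    by (rule power2_eq_imp_eq) auto
qed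

lemma tensor_approx: obtains F where "\<And>n. F n \<in> span (range (\<lambda>(a, b). tp a b))" "F \<longlonglongrightarrow> f"
proof -
  have "f \<in> closure (span (range (\<lambda>(a, b). tp a b)))"
    by (simp add: closure_span_tp)
  then show ?thesis
    using that unfolding closure_sequential by blast
qed

lemma bounded_linear_eq_on_tp:
  assumes L: "bounded_linear L" "bounded_linear L'" and eq: "\<And>a b. L (tp a b) = L' (tp a b)"
  shows "L = L'"
proof -
  have "L x = L' x" if "x \<in> span (range (\<lambda>(a, b). tp a b))" for x
    by (rule linear_eq_on_span[OF bounded_linear.linear[OF L(1)] bounded_linear.linear[OF L(2)] _ that])
      (auto simp: eq)
  then have "closure (span (range (\<lambda>(a, b). tp a b))) \<subseteq> {x. L x = L' x}"
    by (intro closure_minimal closed_Collect_eq linear_continuous_on L) auto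
  then show ?thesis
    by (auto simp: closure_span_tp)
qed

text \<open>Weak characterisation of the partial inner product \<open>v = \<langle>f, g\<rangle>\<^sub>H\<^sub>2\<close>; its
  existence for all \<open>f\<close> is what makes the \<open>THE\<close> in the definition of \<open>partial_ip\<close> meaningful.\<close>
definition partial_ip_rep :: "'b \<Rightarrow> 'h \<Rightarrow> 'a \<Rightarrow> bool" where
  "partial_ip_rep g f v \<longleftrightarrow> (\<forall>a. ip1 v a = ipH f (tp a g))"

lemma partial_ip_rep_unique: "partial_ip_rep g f v \<Longrightarrow> partial_ip_rep g f v' \<Longrightarrow> v = v'"
  using H1.ip_left_eq_zeroD[of "v - v'"]
  by (simp add: partial_ip_rep_def linear_diff[OF bounded_linear.linear[OF H1.bounded_linear_ip_left]])

lemma partial_ip_rep_add: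
  "partial_ip_rep g f v \<Longrightarrow> partial_ip_rep g f' v' \<Longrightarrow> partial_ip_rep g (f + f') (v + v')"
  by (simp add: partial_ip_rep_def H1.ip_add_left H.ip_add_left)

lemma partial_ip_rep_scaleR: "partial_ip_rep g f v \<Longrightarrow> partial_ip_rep g (r *\<^sub>R f) (r *\<^sub>R v)"
  by (simp add: partial_ip_rep_def H1.ip_scaleR_left H.ip_scaleR_left)

lemma partial_ip_rep_add_right:
  "partial_ip_rep g f v \<Longrightarrow> partial_ip_rep g' f v' \<Longrightarrow> partial_ip_rep (g + g') f (v + v')"
  by (simp add: partial_ip_rep_def H1.ip_add_left tp_add_right H.ip_add_right)

lemma partial_ip_rep_scaleR_right: "partial_ip_rep g f v \<Longrightarrow> partial_ip_rep (r *\<^sub>R g) f (r *\<^sub>R v)"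
  by (simp add: partial_ip_rep_def H1.ip_scaleR_left tp_scaleR_right H.ip_scaleR_right)

lemma partial_ip_rep_tp: "partial_ip_rep g (tp a b) (sc1 (ip2 b g) a)"
  by (simp add: partial_ip_rep_def H1.ip_sc_left ip_tp)

lemma partial_ip_rep_norm_le:
  assumes "partial_ip_rep g f v"
  shows "norm v \<le> norm f * norm g"
proof -
  have "norm v * norm v = Re (ipH f (tp v g))"
    using assms H1.Re_ip_self[of v] by (simp add: partial_ip_rep_def power2_eq_square)
  also have "\<dots> \<le> norm f * (norm v * norm g)"
    using complex_Re_le_cmod H.norm_ip_le[of f "tp v g"] by (metis norm_tp order_trans)
  finally show ?thesis
    by (cases "v = 0") (simp_all add: algebra_simps)
qed

lemma partial_ip_rep_span:
  assumes "f \<in> span (range (\<lambda>(a, b). tp a b))"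
  shows "\<exists>v. partial_ip_rep g f v"
proof -
  have "range (\<lambda>(a, b). tp a b) \<subseteq> {f. \<exists>v. partial_ip_rep g f v}"
  proof (rule image_subsetI)
    fix p :: "'a \<times> 'b"
    show "(\<lambda>(a, b). tp a b) p \<in> {f. \<exists>v. partial_ip_rep g f v}"
      by (cases p) (simp only: case_prod_conv mem_Collect_eq, blast intro: partial_ip_rep_tp)
  qed
  moreover have "partial_ip_rep g 0 0"
    by (simp add: partial_ip_rep_def)
  then have "subspace {f. \<exists>v. partial_ip_rep g f v}"
    unfolding subspace_def using partial_ip_rep_add partial_ip_rep_scaleR by blast
  ultimately have "span (range (\<lambda>(a, b). tp a b)) \<subseteq> {f. \<exists>v. partial_ip_rep g f v}"
    by (rule span_minimal)
  then show ?thesis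
    using assms by blast
qed

lemma partial_ip_rep_limit:
  assumes F: "F \<longlonglongrightarrow> f" and V: "\<And>n. partial_ip_rep g (F n) (V n)"
  shows "\<exists>v. partial_ip_rep g f v"
proof -
  have dist_V: "dist (V m) (V n) \<le> dist (F m) (F n) * norm g" for m n
    using partial_ip_rep_norm_le[OF partial_ip_rep_add[OF V partial_ip_rep_scaleR[OF V, of "-1"]]]
    by (simp add: dist_norm)
  have "Cauchy V"
  proof (rule metric_CauchyI)
    fix e :: real assume "0 < e"
    then have "0 < e / (norm g + 1)"
      by (simp add: add_nonneg_pos)
    then obtain M where M: "\<And>m n. M \<le> m \<Longrightarrow> M \<le> n \<Longrightarrow> dist (F m) (F n) < e / (norm g + 1)"
      using metric_CauchyD[OF LIMSEQ_imp_Cauchy[OF F]] by blast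
    have "dist (V m) (V n) < e" if "M \<le> m" "M \<le> n" for m n
    proof -
      have "dist (V m) (V n) \<le> dist (F m) (F n) * (norm g + 1)"
        by (rule order_trans[OF dist_V]) (simp add: mult_left_mono)
      also have "\<dots> < e"
        using M[OF that] by (simp add: pos_less_divide_eq add_nonneg_pos)
      finally show ?thesis .
    qed
    then show "\<exists>M. \<forall>m\<ge>M. \<forall>n\<ge>M. dist (V m) (V n) < e"
      by blast
  qed
  then obtain v where v: "V \<longlonglongrightarrow> v"
    by (auto simp: Cauchy_convergent_iff convergent_def)
  have "partial_ip_rep g f v"
    unfolding partial_ip_rep_def
  proof
    fix a
    have "(\<lambda>n. ip1 (V n) a) \<longlonglongrightarrow> ip1 v a" "(\<lambda>n. ipH (F n) (tp a g)) \<longlonglongrightarrow> ipH f (tp a g)"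
      using bounded_linear.tendsto[OF H1.bounded_linear_ip_left v]
        bounded_linear.tendsto[OF H.bounded_linear_ip_left F] .
    then show "ip1 v a = ipH f (tp a g)"
      using V LIMSEQ_unique by (fastforce simp: partial_ip_rep_def)
  qed
  then show ?thesis ..
qed

lemma partial_ip_rep_exists: "\<exists>v. partial_ip_rep g f v"
proof -
  obtain F where F: "\<And>n. F n \<in> span (range (\<lambda>(a, b). tp a b))" "F \<longlonglongrightarrow> f"
    using tensor_approx[where f=f] by blast
  then have "\<forall>n. \<exists>v. partial_ip_rep g (F n) v"
    using partial_ip_rep_span by blast
  then obtain V where "\<And>n. partial_ip_rep g (F n) (V n)"
    by metis
  with F(2) show ?thesis
    by (rule partial_ip_rep_limit)
qed

lemma partial_ip_rep_partial_ip: "partial_ip_rep g f (partial_ip sc1 ip2 tp f g)"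
proof -
  define L where "L f = (THE v. partial_ip_rep g f v)" for f
  have L: "partial_ip_rep g f (L f)" for f
    unfolding L_def using partial_ip_rep_exists partial_ip_rep_unique by (metis theI)
  then have L_eqI: "partial_ip_rep g f v \<Longrightarrow> L f = v" for f v
    using partial_ip_rep_unique by blast
  have "bounded_linear L"
  proof (rule bounded_linear_intro[where K="norm g"])
    show "L (x + y) = L x + L y" for x y
      by (intro L_eqI partial_ip_rep_add L)
    show "L (r *\<^sub>R x) = r *\<^sub>R L x" for r x
      by (intro L_eqI partial_ip_rep_scaleR L)
    show "norm (L x) \<le> norm x * norm g" for x
      by (rule partial_ip_rep_norm_le[OF L])
  qed
  moreover have "L (tp a b) = sc1 (ip2 b g) a" for a b
    by (rule L_eqI, rule partial_ip_rep_tp)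
  ultimately have "(THE L. bounded_linear L \<and> (\<forall>a b. L (tp a b) = sc1 (ip2 b g) a)) = L"
    by (intro the_equality) (auto intro: bounded_linear_eq_on_tp)
  then show ?thesis
    using L by (simp add: partial_ip_def)
qed

lemma partial_ip_eqI: "partial_ip_rep g f v \<Longrightarrow> partial_ip sc1 ip2 tp f g = v"
  using partial_ip_rep_partial_ip partial_ip_rep_unique by blast

lemma partial_ip_tp: "partial_ip sc1 ip2 tp (tp a b) g = sc1 (ip2 b g) a"
  by (rule partial_ip_eqI, rule partial_ip_rep_tp)

lemma norm_partial_ip_le: "norm (partial_ip sc1 ip2 tp f g) \<le> norm f * norm g"
  by (rule partial_ip_rep_norm_le, rule partial_ip_rep_partial_ip)

lemma bounded_linear_partial_ip_left: "bounded_linear (\<lambda>f. partial_ip sc1 ip2 tp f g)"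
  by (intro bounded_linear_intro[where K="norm g"] partial_ip_eqI norm_partial_ip_le
      partial_ip_rep_add partial_ip_rep_scaleR partial_ip_rep_partial_ip)

lemma bounded_linear_partial_ip_right: "bounded_linear (\<lambda>g. partial_ip sc1 ip2 tp f g)"
proof (rule bounded_linear_intro[where K="norm f"])
  show "partial_ip sc1 ip2 tp f (g + g') = partial_ip sc1 ip2 tp f g + partial_ip sc1 ip2 tp f g'" for g g'
    by (intro partial_ip_eqI partial_ip_rep_add_right partial_ip_rep_partial_ip)
  show "partial_ip sc1 ip2 tp f (r *\<^sub>R g) = r *\<^sub>R partial_ip sc1 ip2 tp f g" for r g
    by (intro partial_ip_eqI partial_ip_rep_scaleR_right partial_ip_rep_partial_ip)
  show "norm (partial_ip sc1 ip2 tp f g) \<le> norm g * norm f" for g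
    using norm_partial_ip_le[of f g] by (simp add: mult.commute)
qed

lemma span_tp_eq_sum:
  assumes "F \<in> span (range (\<lambda>(a, b). tp a b))"
  obtains T :: "'h set" and A B where "finite T" "F = (\<Sum>i\<in>T. tp (A i) (B i))"
proof -
  obtain t r where t: "finite t" "t \<subseteq> range (\<lambda>(a, b). tp a b)" "F = (\<Sum>x\<in>t. r x *\<^sub>R x)"
    using assms unfolding span_explicit by (auto simp only: mem_Collect_eq)
  have "\<forall>x\<in>t. \<exists>p. x = tp (fst p) (snd p)"
  proof
    fix x assume "x \<in> t"
    then obtain q where "x = (\<lambda>(a, b). tp a b) q"
      using t(2) by blast
    then show "\<exists>p. x = tp (fst p) (snd p)"
      by (cases q) auto
  qed
  then obtain p where p: "\<And>x. x \<in> t \<Longrightarrow> x = tp (fst (p x)) (snd (p x))"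
    by metis
  have "r x *\<^sub>R x = tp (r x *\<^sub>R fst (p x)) (snd (p x))" if "x \<in> t" for x
  proof -
    have "r x *\<^sub>R x = r x *\<^sub>R tp (fst (p x)) (snd (p x))"
      using p[OF that] by metis
    then show ?thesis
      by (simp add: tp_scaleR_left)
  qed
  then have "F = (\<Sum>x\<in>t. tp (r x *\<^sub>R fst (p x)) (snd (p x)))"
    unfolding t(3) by (rule sum.cong[OF refl])
  then show ?thesis
    by (rule that[OF t(1)])
qed

end

section \<open>The wavelet transform\<close>

locale parseval_wavelet = hilbert_tensor sc1 sc2 scH ip1 ip2 ipH tp
  for sc1 :: "complex \<Rightarrow> 'a::{real_normed_vector,complete_space} \<Rightarrow> 'a"
    and sc2 :: "complex \<Rightarrow> 'b::{real_normed_vector,complete_space} \<Rightarrow> 'b"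
    and scH :: "complex \<Rightarrow> 'h::{real_normed_vector,complete_space} \<Rightarrow> 'h"
    and ip1 ip2 ipH tp +
  fixes \<mu> :: "'g::topological_space measure"
    and \<psi> :: "'g \<Rightarrow> 'b"
  assumes sets_\<mu>: "sets \<mu> = sets borel"
    and continuous_\<psi>: "continuous_on UNIV \<psi>"
    and frame: "continuous_parseval_frame ip2 \<mu> \<psi>"
begin

abbreviation W :: "'h \<Rightarrow> 'g \<Rightarrow> 'a" where
  "W \<equiv> wavelet_transform sc1 ip2 tp \<psi>"

abbreviation energy :: "'g set \<Rightarrow> 'h \<Rightarrow> ennreal" where
  "energy A f \<equiv> \<integral>\<^sup>+z\<in>A. ennreal ((norm (W f z))\<^sup>2) \<partial>\<mu>"

lemma W_eq: "W f z = partial_ip sc1 ip2 tp f (\<psi> z)"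
  by (simp add: wavelet_transform_def)

lemma frame_integrable: "integrable \<mu> (\<lambda>z. ip2 f (\<psi> z) * ip2 (\<psi> z) g)"
  and frame_integral: "ip2 f g = (\<integral>z. ip2 f (\<psi> z) * ip2 (\<psi> z) g \<partial>\<mu>)"
  using frame unfolding continuous_parseval_frame_def by blast+

lemma bounded_linear_W: "bounded_linear (\<lambda>f. W f z)"
  by (simp add: W_eq bounded_linear_partial_ip_left)

lemma W_diff: "W (f - g) z = W f z - W g z"
  by (rule linear_diff[OF bounded_linear.linear[OF bounded_linear_W]])

lemma W_minus: "W (- f) z = - W f z"
  by (rule linear_neg[OF bounded_linear.linear[OF bounded_linear_W]])

lemma W_sum: "W (\<Sum>i\<in>I. f i) z = (\<Sum>i\<in>I. W (f i) z)"
  by (rule linear_sum[OF bounded_linear.linear[OF bounded_linear_W]])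

lemma W_tp: "W (tp a b) z = sc1 (ip2 b (\<psi> z)) a"
  by (simp add: W_eq partial_ip_tp)

lemma norm_W_diff_le: "norm (W f z - W f z') \<le> norm f * norm (\<psi> z - \<psi> z')"
proof -
  have "W f z - W f z' = partial_ip sc1 ip2 tp f (\<psi> z - \<psi> z')"
    by (simp add: W_eq linear_diff[OF bounded_linear.linear[OF bounded_linear_partial_ip_right]])
  then show ?thesis
    by (simp add: norm_partial_ip_le)
qed

lemma continuous_on_W: "continuous_on UNIV (W f)"
proof -
  have "continuous_on UNIV (\<lambda>z. partial_ip sc1 ip2 tp f (\<psi> z))"
    using linear_continuous_on[OF bounded_linear_partial_ip_right] continuous_\<psi>
    by (rule continuous_on_compose2[where t=UNIV]) simp
  then show ?thesis
    by (simp add: W_eq[abs_def])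
qed

lemma borel_measurable_W: "W f \<in> borel_measurable \<mu>"
  unfolding measurable_cong_sets[OF sets_\<mu> refl]
  by (rule borel_measurable_continuous_onI[OF continuous_on_W])

lemma borel_measurable_energy_density [measurable]:
  "(\<lambda>z. ennreal ((norm (W f z))\<^sup>2)) \<in> borel_measurable \<mu>"
proof -
  have "continuous_on UNIV (\<lambda>z. (norm (W f z))\<^sup>2)"
    using continuous_on_W by (intro continuous_intros)
  then have "(\<lambda>z. (norm (W f z))\<^sup>2) \<in> borel_measurable \<mu>"
    unfolding measurable_cong_sets[OF sets_\<mu> refl] by (rule borel_measurable_continuous_onI)
  then show ?thesis
    by measurable
qed

lemma space_\<mu>: "space \<mu> = UNIV"
  using sets_eq_imp_space_eq[OF sets_\<mu>] by simp

lemma energy_eq_norm_on_span: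
  assumes "F \<in> span (range (\<lambda>(a, b). tp a b))"
  shows "(\<integral>\<^sup>+z. ennreal ((norm (W F z))\<^sup>2) \<partial>\<mu>) = ennreal ((norm F)\<^sup>2)"
proof -
  obtain T :: "'h set" and A B where T: "finite T" and F: "F = (\<Sum>i\<in>T. tp (A i) (B i))"
    using span_tp_eq_sum[OF assms] by blast
  define h where "h z = (\<Sum>i\<in>T. \<Sum>j\<in>T. ip2 (B i) (\<psi> z) * ip2 (\<psi> z) (B j) * ip1 (A i) (A j))" for z
  have cnj_ip2: "cnj (ip2 b (\<psi> z)) = ip2 (\<psi> z) b" for b z
    using H2.ip_cnj[of "\<psi> z" b] by simp
  have "ip1 (W F z) (W F z) = h z" for z
    unfolding F W_sum W_tp h_def
    by (simp add: H1.ip_sum_left H1.ip_sum_right H1.ip_sc_left H1.ip_sc_right cnj_ip2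
        sum_distrib_left mult_ac) (rule sum.swap)
  then have norm_W_F: "(norm (W F z))\<^sup>2 = Re (h z)" for z
    by (simp flip: H1.Re_ip_self)
  have h: "integrable \<mu> h"
    unfolding h_def by (intro Bochner_Integration.integrable_sum integrable_mult_left frame_integrable)
  have "integral\<^sup>L \<mu> h = (\<Sum>i\<in>T. \<Sum>j\<in>T. ip2 (B i) (B j) * ip1 (A i) (A j))"
    unfolding h_def by (simp add: Bochner_Integration.integral_sum frame_integrable flip: frame_integral)
  also have "\<dots> = ipH F F"
    unfolding F by (simp add: H.ip_sum_left H.ip_sum_right ip_tp mult.commute) (rule sum.swap)
  finally have integral_h: "integral\<^sup>L \<mu> h = ipH F F" .
  have "(\<integral>\<^sup>+z. ennreal ((norm (W F z))\<^sup>2) \<partial>\<mu>) = (\<integral>\<^sup>+z. ennreal (Re (h z)) \<partial>\<mu>)"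
    by (simp add: norm_W_F)
  also have "\<dots> = ennreal (\<integral>z. Re (h z) \<partial>\<mu>)"
  proof (rule nn_integral_eq_integral)
    show "integrable \<mu> (\<lambda>z. Re (h z))"
      using h by (rule integrable_Re)
    show "AE z in \<mu>. 0 \<le> Re (h z)"
      by (rule AE_I2) (metis norm_W_F zero_le_power2)
  qed
  also have "(\<integral>z. Re (h z) \<partial>\<mu>) = (norm F)\<^sup>2"
    using h by (simp add: integral_h H.Re_ip_self)
  finally show ?thesis .
qed

lemma W_tendsto: "F \<longlonglongrightarrow> f \<Longrightarrow> (\<lambda>n. W (F n) z) \<longlonglongrightarrow> W f z"
  by (rule bounded_linear.tendsto[OF bounded_linear_W])

lemma energy_le_norm: "energy A f \<le> ennreal ((norm f)\<^sup>2)"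
proof -
  obtain F where F: "\<And>n. F n \<in> span (range (\<lambda>(a, b). tp a b))" "F \<longlonglongrightarrow> f"
    using tensor_approx[where f=f] by blast
  have liminf: "liminf (\<lambda>n. ennreal ((norm (W (F n) z))\<^sup>2)) = ennreal ((norm (W f z))\<^sup>2)" for z
    by (intro lim_imp_Liminf trivial_limit_sequentially tendsto_intros W_tendsto F(2))
  have "energy A f \<le> energy UNIV f"
    by (rule nn_set_integral_set_mono) simp
  also have "\<dots> = (\<integral>\<^sup>+z. liminf (\<lambda>n. ennreal ((norm (W (F n) z))\<^sup>2)) \<partial>\<mu>)"
    by (simp add: liminf)
  also have "\<dots> \<le> liminf (\<lambda>n. \<integral>\<^sup>+z. ennreal ((norm (W (F n) z))\<^sup>2) \<partial>\<mu>)"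
    by (rule nn_integral_liminf) measurable
  also have "\<dots> = liminf (\<lambda>n. ennreal ((norm (F n))\<^sup>2))"
    by (simp add: energy_eq_norm_on_span F(1))
  also have "\<dots> = ennreal ((norm f)\<^sup>2)"
    by (intro lim_imp_Liminf trivial_limit_sequentially tendsto_intros F(2))
  finally show ?thesis .
qed

lemma energy_diff_le:
  assumes "A \<in> sets borel"
  shows "energy A (f - g) \<le> 2 * energy A f + 2 * energy A g"
  using nn_set_integral_norm_add_power2_le[OF borel_measurable_W[of f] borel_measurable_W[of "- g"], of A] assms
  by (simp add: W_diff W_minus sets_\<mu>)

text \<open>The converse of \<open>energy_le_norm\<close> up to a factor 2, which is all the compactness argument
  needs; it avoids a Minkowski inequality for the \<open>L\<^sup>2\<close> norm of \<open>W f\<close>.\<close>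
lemma norm_le_energy: "ennreal ((norm f)\<^sup>2) \<le> 2 * (\<integral>\<^sup>+z. ennreal ((norm (W f z))\<^sup>2) \<partial>\<mu>)"
proof -
  obtain F where F: "\<And>n. F n \<in> span (range (\<lambda>(a, b). tp a b))" "F \<longlonglongrightarrow> f"
    using tensor_approx[where f=f] by blast
  let ?X = "\<integral>\<^sup>+z. ennreal ((norm (W f z))\<^sup>2) \<partial>\<mu>"
  have bound: "ennreal ((norm (F n))\<^sup>2) \<le> 2 * ?X + 2 * ennreal ((norm (f - F n))\<^sup>2)" for n
  proof -
    have "ennreal ((norm (F n))\<^sup>2) = energy UNIV (f - (f - F n))"
      by (simp add: energy_eq_norm_on_span F(1))
    also have "\<dots> \<le> 2 * energy UNIV f + 2 * energy UNIV (f - F n)"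
      by (rule energy_diff_le) simp
    also have "\<dots> \<le> 2 * ?X + 2 * ennreal ((norm (f - F n))\<^sup>2)"
      using energy_le_norm[where A=UNIV and f="f - F n"] by (simp add: add_left_mono mult_left_mono)
    finally show ?thesis .
  qed
  have "(\<lambda>n. 2 * ?X + 2 * ennreal ((norm (f - F n))\<^sup>2)) \<longlonglongrightarrow> 2 * ?X + 2 * ennreal ((norm (f - f))\<^sup>2)"
    by (intro tendsto_intros F(2)) auto
  then have upper: "(\<lambda>n. 2 * ?X + 2 * ennreal ((norm (f - F n))\<^sup>2)) \<longlonglongrightarrow> 2 * ?X"
    by simp
  have "(\<lambda>n. ennreal ((norm (F n))\<^sup>2)) \<longlonglongrightarrow> ennreal ((norm f)\<^sup>2)"
    by (intro tendsto_intros F(2))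
  from LIMSEQ_le[OF this upper] show ?thesis
    using bound by blast
qed

lemma energy_tail_tendsto_zero:
  assumes "\<And>n. A n \<in> sets borel" "incseq A" "(\<Union>n. A n) = UNIV"
  shows "(\<lambda>n. energy (UNIV - A n) f) \<longlonglongrightarrow> 0"
proof -
  have "(\<integral>\<^sup>+z. ennreal ((norm (W f z))\<^sup>2) \<partial>\<mu>) \<le> ennreal ((norm f)\<^sup>2)"
    using energy_le_norm[where A=UNIV and f=f] by simp
  then have "(\<integral>\<^sup>+z. ennreal ((norm (W f z))\<^sup>2) \<partial>\<mu>) \<noteq> \<infinity>"
    unfolding infinity_ennreal_def by (rule neq_top_trans[OF ennreal_neq_top])
  then show ?thesis
    using tendsto_nn_set_integral_Diff_incseq[OF borel_measurable_energy_density, of A] assms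
    by (simp add: sets_\<mu> space_\<mu>)
qed

lemma W_equicontinuity_net:
  assumes "compact C" "0 < \<delta>"
  obtains Z where "finite Z" "\<And>z. z \<in> C \<Longrightarrow> \<exists>z'\<in>Z. \<forall>f. norm (W f z - W f z') \<le> \<delta> * norm f"
proof -
  define U where "U z = {y. dist (\<psi> y) (\<psi> z) < \<delta>}" for z
  have "open (U z)" for z
    unfolding U_def by (intro open_Collect_less continuous_intros continuous_\<psi>)
  moreover have "C \<subseteq> (\<Union>z\<in>C. U z)"
    using assms(2) by (auto simp: U_def)
  ultimately obtain Z where Z: "finite Z" "C \<subseteq> (\<Union>z\<in>Z. U z)"
    using compactE_image[OF assms(1), where f=U] by metis
  have "\<exists>z'\<in>Z. \<forall>f. norm (W f z - W f z') \<le> \<delta> * norm f" if z: "z \<in> C" for z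
  proof -
    obtain z' where z': "z' \<in> Z" "dist (\<psi> z) (\<psi> z') < \<delta>"
      using Z(2) z by (auto simp: U_def)
    have "norm (W f z - W f z') \<le> \<delta> * norm f" for f
    proof -
      have "norm (W f z - W f z') \<le> norm f * norm (\<psi> z - \<psi> z')"
        by (rule norm_W_diff_le)
      also have "\<dots> \<le> norm f * \<delta>"
        using z'(2) by (intro mult_left_mono) (auto simp: dist_norm)
      finally show ?thesis
        by (simp add: mult.commute)
    qed
    then show ?thesis
      using z'(1) by blast
  qed
  then show ?thesis
    using that Z(1) by blast
qed

lemma norm_diff_power2_le:
  assumes A: "A \<in> sets borel" and close: "\<And>z. z \<in> A \<Longrightarrow> norm (W f z - W g z) \<le> c"
    and measure: "emeasure \<mu> A \<le> ennreal m" and "0 \<le> m"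
    and tails: "energy (UNIV - A) f \<le> ennreal \<eta>" "energy (UNIV - A) g \<le> ennreal \<eta>" and "0 \<le> \<eta>"
  shows "(norm (f - g))\<^sup>2 \<le> 2 * (c\<^sup>2 * m + 4 * \<eta>)"
proof -
  have inside: "energy A (f - g) \<le> ennreal (c\<^sup>2 * m)"
  proof -
    have "energy A (f - g) \<le> (\<integral>\<^sup>+z. ennreal (c\<^sup>2) * indicator A z \<partial>\<mu>)"
    proof (rule nn_integral_mono)
      fix z
      show "ennreal ((norm (W (f - g) z))\<^sup>2) * indicator A z \<le> ennreal (c\<^sup>2) * indicator A z"
        using close[of z] by (cases "z \<in> A") (auto simp: W_diff intro!: ennreal_leI power_mono)
    qed
    also have "\<dots> = ennreal (c\<^sup>2) * emeasure \<mu> A"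
      using A by (simp add: nn_integral_cmult_indicator sets_\<mu>)
    also have "\<dots> \<le> ennreal (c\<^sup>2 * m)"
      using measure \<open>0 \<le> m\<close> by (simp add: ennreal_mult mult_left_mono)
    finally show ?thesis .
  qed
  have outside: "energy (UNIV - A) (f - g) \<le> ennreal (4 * \<eta>)"
  proof -
    have "energy (UNIV - A) (f - g) \<le> 2 * energy (UNIV - A) f + 2 * energy (UNIV - A) g"
      using A by (intro energy_diff_le) auto
    also have "\<dots> \<le> 2 * ennreal \<eta> + 2 * ennreal \<eta>"
      using tails by (intro add_mono mult_left_mono) auto
    also have "\<dots> = ennreal (4 * \<eta>)"
      using \<open>0 \<le> \<eta>\<close> by (simp add: ennreal_mult flip: distrib_right)
    finally show ?thesis .
  qed
  have measurable: "(\<lambda>z. ennreal ((norm (W (f - g) z))\<^sup>2)) \<in> borel_measurable \<mu>"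
    by measurable
  have "ennreal ((norm (f - g))\<^sup>2) \<le> 2 * (\<integral>\<^sup>+z. ennreal ((norm (W (f - g) z))\<^sup>2) \<partial>\<mu>)"
    by (rule norm_le_energy)
  also have "(\<integral>\<^sup>+z. ennreal ((norm (W (f - g) z))\<^sup>2) \<partial>\<mu>) = energy A (f - g) + energy (UNIV - A) (f - g)"
    using nn_integral_disjoint_pair[OF measurable, of A "UNIV - A"] A by (simp add: sets_\<mu>)
  also have "2 * \<dots> \<le> 2 * (ennreal (c\<^sup>2 * m) + ennreal (4 * \<eta>))"
    using inside outside by (intro mult_left_mono add_mono) auto
  also have "\<dots> = ennreal (2 * (c\<^sup>2 * m + 4 * \<eta>))"
    using \<open>0 \<le> m\<close> \<open>0 \<le> \<eta>\<close> by (simp add: ennreal_mult)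
  finally show ?thesis
    using \<open>0 \<le> m\<close> \<open>0 \<le> \<eta>\<close> by (subst (asm) ennreal_le_iff) auto
qed

lemma compact_closure_W_image:
  assumes "compact (closure K)"
  shows "compact (closure ((\<lambda>f. W f z) ` K))"
  using assms linear_continuous_on[OF bounded_linear_W] by (rule compact_closure_continuous_image)

lemma energy_tail_uniform:
  assumes "compact (closure K)" and A: "\<And>n. A n \<in> sets borel" "incseq A" "(\<Union>n. A n) = UNIV"
  shows "(\<lambda>n. SUP f\<in>K. energy (UNIV - A n) f) \<longlonglongrightarrow> 0"
proof (rule ennreal_tendsto_zeroI)
  fix e :: real assume "0 < e"
  define q where "q = e / 4"
  define d where "d = sqrt q"
  have "0 < q" "0 < d" "d\<^sup>2 = q"
    using \<open>0 < e\<close> by (auto simp: q_def d_def)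
  obtain k where k: "finite k" "k \<subseteq> K" "K \<subseteq> (\<Union>x\<in>k. ball x d)"
    using compact_closure_imp_finite_net[OF assms(1) \<open>0 < d\<close>] by blast
  have "eventually (\<lambda>n. \<forall>x\<in>k. energy (UNIV - A n) x < ennreal q) sequentially"
    using \<open>0 < q\<close> energy_tail_tendsto_zero[OF A]
    by (intro eventually_ball_finite k(1) ballI order_tendstoD(2)) auto
  then show "eventually (\<lambda>n. (SUP f\<in>K. energy (UNIV - A n) f) \<le> ennreal e) sequentially"
  proof eventually_elim
    case (elim n)
    show ?case
    proof (rule SUP_least)
      fix f assume "f \<in> K"
      then obtain x where x: "x \<in> k" "dist x f < d"
        using k(3) by auto
      have "(norm (x - f))\<^sup>2 \<le> q"
        using x(2) \<open>d\<^sup>2 = q\<close> by (metis dist_norm less_imp_le norm_ge_zero power_mono)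
      then have near: "energy (UNIV - A n) (x - f) \<le> ennreal q"
        using energy_le_norm[where A="UNIV - A n" and f="x - f"] by (meson ennreal_leI order_trans)
      have "energy (UNIV - A n) f = energy (UNIV - A n) (x - (x - f))"
        by simp
      also have "\<dots> \<le> 2 * energy (UNIV - A n) x + 2 * energy (UNIV - A n) (x - f)"
        using A(1) by (intro energy_diff_le) auto
      also have "\<dots> \<le> 2 * ennreal q + 2 * ennreal q"
        using elim x(1) near by (intro add_mono mult_left_mono) auto
      also have "\<dots> = ennreal (4 * q)"
        using \<open>0 < q\<close> by (simp add: ennreal_mult flip: distrib_right)
      finally show "energy (UNIV - A n) f \<le> ennreal e"
        by (simp add: q_def)
    qed
  qed
qed

text \<open>Pointwise precompactness at the finitely many points of a net upgrades, by the
  equicontinuity of \<open>W\<close> on bounded sets, to total boundedness uniformly on a compact set.\<close>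
lemma W_finite_net_uniform_on:
  assumes "compact C" "0 < c" "bounded K"
    and pointwise: "\<And>z. compact (closure ((\<lambda>f. W f z) ` K))"
  obtains k where "finite k" "k \<subseteq> K" "\<And>f. f \<in> K \<Longrightarrow> \<exists>g\<in>k. \<forall>z\<in>C. norm (W f z - W g z) \<le> c"
proof -
  obtain M where "0 < M" and M: "\<And>f. f \<in> K \<Longrightarrow> norm f \<le> M"
    using \<open>bounded K\<close> unfolding bounded_pos by blast
  have "0 < c / (3 * M)"
    using \<open>0 < c\<close> \<open>0 < M\<close> by simp
  then obtain Z where Z: "finite Z" "\<And>z. z \<in> C \<Longrightarrow> \<exists>z'\<in>Z. \<forall>f. norm (W f z - W f z') \<le> c / (3 * M) * norm f"
    using W_equicontinuity_net[OF \<open>compact C\<close>] by metis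
  have "0 < c / 3"
    using \<open>0 < c\<close> by simp
  then obtain k where k: "finite k" "k \<subseteq> K" "\<And>f. f \<in> K \<Longrightarrow> \<exists>g\<in>k. \<forall>z\<in>Z. dist (W f z) (W g z) < c / 3"
    using finite_net_at_finitely_many_points[where \<Phi>="\<lambda>z f. W f z", OF Z(1) pointwise] by metis
  have "\<exists>g\<in>k. \<forall>z\<in>C. norm (W f z - W g z) \<le> c" if "f \<in> K" for f
  proof -
    obtain g where "g \<in> k" and g: "\<And>z. z \<in> Z \<Longrightarrow> dist (W f z) (W g z) < c / 3"
      using k(3)[OF \<open>f \<in> K\<close>] by blast
    have "norm (W f z - W g z) \<le> c" if "z \<in> C" for z
    proof -
      obtain z' where "z' \<in> Z" and z': "\<And>h. norm (W h z - W h z') \<le> c / (3 * M) * norm h"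
        using Z(2)[OF \<open>z \<in> C\<close>] by blast
      have equi: "norm (W h z - W h z') \<le> c / 3" if "h \<in> K" for h
      proof -
        have "norm (W h z - W h z') \<le> c / (3 * M) * norm h"
          by (rule z')
        also have "\<dots> \<le> c / (3 * M) * M"
          using M[OF that] \<open>0 < c\<close> \<open>0 < M\<close> by (intro mult_left_mono) auto
        also have "\<dots> = c / 3"
          using \<open>0 < M\<close> by simp
        finally show ?thesis .
      qed
      have "norm (W f z' - W g z') \<le> c / 3"
        using g[OF \<open>z' \<in> Z\<close>] by (simp add: dist_norm)
      moreover have "norm (W g z' - W g z) \<le> c / 3"
        using equi[of g] \<open>g \<in> k\<close> k(2) by (auto simp: norm_minus_commute)
      ultimately have "norm (W f z - W g z) \<le> c / 3 + (c / 3 + c / 3)"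
        using equi[OF \<open>f \<in> K\<close>] by (intro norm_diff_triangle_le) auto
      then show ?thesis
        by simp
    qed
    then show ?thesis
      using \<open>g \<in> k\<close> by blast
  qed
  then show ?thesis
    using that k(1,2) by blast
qed

lemma compact_closure_if_tails_vanish:
  assumes "bounded K"
    and pointwise: "\<And>z. compact (closure ((\<lambda>f. W f z) ` K))"
    and tails: "(\<lambda>n. SUP f\<in>K. energy (UNIV - A n) f) \<longlonglongrightarrow> 0"
    and A: "\<And>n. A n \<in> sets borel" "\<And>n. compact (closure (A n))"
    and finite_measure: "\<And>C. compact C \<Longrightarrow> emeasure \<mu> C < \<infinity>"
  shows "compact (closure K)"
proof (rule finite_nets_imp_compact_closure)
  fix e :: real assume "0 < e"
  define \<eta> where "\<eta> = e\<^sup>2 / 16"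
  have "0 < \<eta>"
    using \<open>0 < e\<close> by (simp add: \<eta>_def)
  then have "eventually (\<lambda>n. (SUP f\<in>K. energy (UNIV - A n) f) < ennreal \<eta>) sequentially"
    using tails by (intro order_tendstoD(2)) auto
  then obtain n where n: "(SUP f\<in>K. energy (UNIV - A n) f) < ennreal \<eta>"
    unfolding eventually_sequentially by blast
  have tail: "energy (UNIV - A n) f \<le> ennreal \<eta>" if "f \<in> K" for f
    by (rule order_trans[OF SUP_upper[OF that] less_imp_le[OF n]])
  have "emeasure \<mu> (A n) \<le> emeasure \<mu> (closure (A n))"
    by (rule emeasure_mono[OF closure_subset]) (simp add: sets_\<mu>)
  then have "emeasure \<mu> (A n) < \<infinity>"
    using finite_measure[OF A(2)] by (rule le_less_trans)
  then obtain m where m: "emeasure \<mu> (A n) = ennreal m" "0 \<le> m"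
    by (cases "emeasure \<mu> (A n)") auto
  define c where "c = e / sqrt (8 * (m + 1))"
  have "0 < c"
    using \<open>0 < e\<close> \<open>0 \<le> m\<close> by (simp add: c_def)
  have "c\<^sup>2 * (m + 1) = e\<^sup>2 / 8"
    using \<open>0 \<le> m\<close> by (simp add: c_def field_simps)
  moreover have "c\<^sup>2 * m \<le> c\<^sup>2 * (m + 1)"
    by (intro mult_left_mono) auto
  ultimately have c: "c\<^sup>2 * m \<le> e\<^sup>2 / 8"
    by linarith
  obtain k where k: "finite k" "k \<subseteq> K" "\<And>f. f \<in> K \<Longrightarrow> \<exists>g\<in>k. \<forall>z\<in>closure (A n). norm (W f z - W g z) \<le> c"
    using W_finite_net_uniform_on[OF A(2) \<open>0 < c\<close> \<open>bounded K\<close> pointwise] by blast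
  have "\<exists>g\<in>k. dist g f < e" if f: "f \<in> K" for f
  proof -
    obtain g where "g \<in> k" and g: "\<And>z. z \<in> closure (A n) \<Longrightarrow> norm (W f z - W g z) \<le> c"
      using k(3)[OF f] by blast
    have "(norm (f - g))\<^sup>2 \<le> 2 * (c\<^sup>2 * m + 4 * \<eta>)"
      using \<open>g \<in> k\<close> k(2) f \<open>0 < \<eta>\<close>
      by (intro norm_diff_power2_le[OF A(1) _ _ \<open>0 \<le> m\<close> tail tail])
        (auto simp: m intro: g closure_subset[THEN subsetD])
    also have "\<dots> < e\<^sup>2"
      using c zero_less_power[OF \<open>0 < e\<close>, of 2] unfolding \<eta>_def by argo
    finally have "norm (f - g) < e"
      using \<open>0 < e\<close> by (simp add: power_less_imp_less_base)
    then show ?thesis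
      using \<open>g \<in> k\<close> by (auto simp: dist_norm norm_minus_commute)
  qed
  then show "\<exists>k. finite k \<and> k \<subseteq> K \<and> K \<subseteq> (\<Union>x\<in>k. ball x e)"
    using k(1,2) by (auto simp: Bex_def)
qed

end

theorem proposition4p5:
  fixes sc1 :: "complex \<Rightarrow> 'a::{real_normed_vector,complete_space} \<Rightarrow> 'a"
    and sc2 :: "complex \<Rightarrow> 'b::{real_normed_vector,complete_space} \<Rightarrow> 'b"
    and scH :: "complex \<Rightarrow> 'h::{real_normed_vector,complete_space} \<Rightarrow> 'h"
    and ip1 :: "'a \<Rightarrow> 'a \<Rightarrow> complex"
    and ip2 :: "'b \<Rightarrow> 'b \<Rightarrow> complex"
    and ipH :: "'h \<Rightarrow> 'h \<Rightarrow> complex"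
    and tp :: "'a \<Rightarrow> 'b \<Rightarrow> 'h"
    and \<mu> :: "'g::{topological_group_add,t2_space} measure"
    and E :: "nat \<Rightarrow> 'g set"
    and \<psi> :: "'g \<Rightarrow> 'b"
    and K :: "'h set"
  assumes H1: "separable_hilbert sc1 ip1"
    and H2: "separable_hilbert sc2 ip2"
    and G_lc: "locally_compact_space (euclidean :: 'g topology)"
    and G_sep: "separable_space (euclidean :: 'g topology)"
    and haar: "left_haar_measure \<mu>"
    and E_open: "\<And>N. N \<ge> 1 \<Longrightarrow> open (E N)"
    and E_precompact: "\<And>N. N \<ge> 1 \<Longrightarrow> compact (closure (E N))"
    and E_mono: "\<And>N. N \<ge> 1 \<Longrightarrow> E N \<subseteq> E (Suc N)"
    and E_sym: "\<And>N. N \<ge> 1 \<Longrightarrow> uminus ` E N = E N"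
    and E_mult: "\<And>N. N \<ge> 1 \<Longrightarrow> {x + y | x y. x \<in> E N \<and> y \<in> E N} \<subseteq> E (2 * N)"
    and E_cover: "(\<Union>N\<in>{1..}. E N) = UNIV"
    and psi_bounded: "bounded (range \<psi>)"
    and psi_cont: "continuous_on UNIV \<psi>"
    and frame: "continuous_parseval_frame ip2 \<mu> \<psi>"
    and tensor: "hilbert_tensor_product sc1 sc2 scH ip1 ip2 ipH tp"
    and K_bounded: "bounded K"
  shows "compact (closure K) \<longleftrightarrow>
           ((\<forall>z. compact (closure ((\<lambda>f. wavelet_transform sc1 ip2 tp \<psi> f z) ` K))) \<and>
            (\<lambda>N. SUP f\<in>K. \<integral>\<^sup>+ z \<in> UNIV - E N. ennreal ((norm (wavelet_transform sc1 ip2 tp \<psi> f z))\<^sup>2) \<partial>\<mu>)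
              \<longlonglongrightarrow> 0)"
proof -
  interpret parseval_wavelet sc1 sc2 scH ip1 ip2 ipH tp \<mu> \<psi>
    using H1 H2 tensor haar psi_cont frame
    by unfold_locales (auto simp: separable_hilbert_def left_haar_measure_def)
  have E_Suc: "\<And>n. E (Suc n) \<in> sets borel" "\<And>n. compact (closure (E (Suc n)))"
    using E_open E_precompact by simp_all
  have finite_measure: "\<And>C. compact C \<Longrightarrow> emeasure \<mu> C < \<infinity>"
    using haar by (simp add: left_haar_measure_def)
  have tails: "(\<lambda>N. SUP f\<in>K. energy (UNIV - E N) f) \<longlonglongrightarrow> 0
      \<longleftrightarrow> (\<lambda>n. SUP f\<in>K. energy (UNIV - E (Suc n)) f) \<longlonglongrightarrow> 0"
    using filterlim_sequentially_Suc[where f="\<lambda>N. SUP f\<in>K. energy (UNIV - E N) f" and F="nhds 0"]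
    by simp
  show ?thesis
    using compact_closure_W_image tails
      energy_tail_uniform[where A="\<lambda>n. E (Suc n)", OF _ E_Suc(1) exhaustion_Suc[OF E_mono E_cover]]
      compact_closure_if_tails_vanish[where A="\<lambda>n. E (Suc n)", OF K_bounded _ _ E_Suc finite_measure]
    by blast
qed

end
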